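(* Let $p\ge2$, $m\ge1$, $d\ge1$, $S_1>0$. Consider sine networks $s^\theta(x)=V\sin(Wx)$ with $\theta=(W,V)\in\mathbb{R}^{d\times p}\times\mathbb{R}^{p\times d}$ and $\|V\|_\infty\le S_1$. For any $\gamma>0$ and $\delta\in(0,1)$, with probability at least $1-\delta$ over a training sample $S=\{(x^{(i)},y^{(i)})\}_{i=1}^n\sim\mathcal{D}_m^n$, simultaneously for all such $\theta$, \[ \mathbb{P}_{(X,Y)\sim\mathcal{D}_m}\big[h_\theta(X)\ne Y\big]\ \le\ \widehat{\mathcal{R}}_\gamma(s^\theta)+\widetilde{\mathcal{O}}\!\left(\frac{S_1}{\gamma}\cdot\frac{p}{\sqrt n}\right)+\widetilde{\mathcal{O}}\!\left(\frac1{\sqrt n}\right). \]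
   Context: Let $[p]=\{0,\dots,p-1\}$, $e_r$ the standard basis of $\mathbb{R}^p$, $\mathcal{X}_m=\{x\in\{0,\dots,m\}^p:\|x\|_1=m\}$. $\mathcal{D}_m$ is the law of $(X,Y)$ with $s_1,\dots,s_m$ i.i.d. uniform on $[p]$, $X=\sum_i e_{s_i}$, $Y=(\sum_i s_i)\bmod p$. The predictor is $h_\theta(x)=\ell$ if $s^\theta_\ell(x)>s^\theta_k(x)$ for all $k\ne\ell$, and $\bot$ (an error) otherwise. $\|V\|_\infty$ is the matrix $\infty$-norm, i.e. the maximum over rows of the row's $\ell_1$-norm. The empirical $\gamma$-margin error is $\widehat{\mathcal{R}}_\gamma(s^\theta)=\frac1n\sum_{i=1}^n\mathbf{1}\{s^\theta_{y^{(i)}}(x^{(i)})\le\gamma+\max_{j\ne y^{(i)}}s^\theta_j(x^{(i)})\}$. $\widetilde{\mathcal{O}}(\cdot)$ hides absolute constants and polylogarithmic factors (in $n,m,p,S_1,\delta^{-1}$). *)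

theory Defs
  imports "HOL-Probability.Probability"
begin

text \<open>Inputs x are vectors in R^p represented as functions nat => real (coordinates 0..p-1).
  Weight matrices: W :: nat => nat => real (d x p, entry W j r), V (p x d, entry V k j).\<close>

text \<open>The data distribution D_m: s_1..s_m iid uniform on [p], X = sum e_{s_i}, Y = (sum s_i) mod p.\<close>
definition data_dist :: "nat \<Rightarrow> nat \<Rightarrow> ((nat \<Rightarrow> real) \<times> nat) pmf" where
  "data_dist p m =
     map_pmf (\<lambda>s. (\<lambda>r. real (card {i \<in> {..<m}. s i = r}), (\<Sum>i<m. s i) mod p))
       (Pi_pmf {..<m} 0 (\<lambda>_. pmf_of_set {..<p}))"

definition sine_net :: "nat \<Rightarrow> nat \<Rightarrow> (nat \<Rightarrow> nat \<Rightarrow> real) \<Rightarrow> (nat \<Rightarrow> nat \<Rightarrow> real)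
    \<Rightarrow> (nat \<Rightarrow> real) \<Rightarrow> nat \<Rightarrow> real" where
  "sine_net p d W V x k = (\<Sum>j<d. V k j * sin (\<Sum>r<p. W j r * x r))"

definition mat_inf_norm :: "nat \<Rightarrow> nat \<Rightarrow> (nat \<Rightarrow> nat \<Rightarrow> real) \<Rightarrow> real" where
  "mat_inf_norm p d V = Max ((\<lambda>k. \<Sum>j<d. \<bar>V k j\<bar>) ` {..<p})"

text \<open>h_theta(x) = y holds iff s_y(x) > s_k(x) for all k in [p], k /= y
  (h_theta outputs bottom, an error, when there is no strict maximiser).\<close>
definition predicts :: "nat \<Rightarrow> (nat \<Rightarrow> real) \<Rightarrow> nat \<Rightarrow> bool" where
  "predicts p s y \<longleftrightarrow> y < p \<and> (\<forall>k<p. k \<noteq> y \<longrightarrow> s k < s y)"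

definition pop_error :: "nat \<Rightarrow> nat \<Rightarrow> nat \<Rightarrow> (nat \<Rightarrow> nat \<Rightarrow> real) \<Rightarrow> (nat \<Rightarrow> nat \<Rightarrow> real) \<Rightarrow> real" where
  "pop_error p m d W V =
     measure_pmf.prob (data_dist p m) {(x, y). \<not> predicts p (sine_net p d W V x) y}"

definition margin_error :: "nat \<Rightarrow> nat \<Rightarrow> (nat \<Rightarrow> nat \<Rightarrow> real) \<Rightarrow> (nat \<Rightarrow> nat \<Rightarrow> real) \<Rightarrow> real
    \<Rightarrow> nat \<Rightarrow> (nat \<Rightarrow> (nat \<Rightarrow> real) \<times> nat) \<Rightarrow> real" where
  "margin_error p d W V \<gamma> n S =
     real (card {i \<in> {..<n}.
        sine_net p d W V (fst (S i)) (snd (S i))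
          \<le> \<gamma> + Max ((\<lambda>j. sine_net p d W V (fst (S i)) j) ` ({..<p} - {snd (S i)}))}) / real n"

definition sample_dist :: "nat \<Rightarrow> nat \<Rightarrow> nat \<Rightarrow> (nat \<Rightarrow> (nat \<Rightarrow> real) \<times> nat) pmf" where
  "sample_dist p m n = Pi_pmf {..<n} (\<lambda>_. 0, 0) (\<lambda>_. data_dist p m)"

definition logfac :: "nat \<Rightarrow> nat \<Rightarrow> nat \<Rightarrow> real \<Rightarrow> real \<Rightarrow> real" where
  "logfac n m p S1 \<delta> =
     ln (exp 1 + real n) * ln (exp 1 + real m) * ln (exp 1 + real p)
     * ln (exp 1 + S1) * ln (exp 1 + 1 / \<delta>)"

end

theory Submission
  imports Defs
begin

text \<open>
  A covering argument. On the support of \<open>D\<^sub>m\<close> the input \<open>x\<close> is a count vector (nonnegative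
  integers summing to \<open>m\<close>), so every hidden unit \<open>sin (w \<bullet> x)\<close> is \<open>2\<pi>\<close>-periodic in each weight,
  and rounding the first layer to a grid of \<open>G\<close> points of \<open>[0, 2\<pi>)\<close> moves every output by at most
  \<open>S1 \<cdot> 2\<pi>m/G\<close>. Maurey's empirical method replaces row \<open>k\<close> of \<open>V\<close> by the average of \<open>K\<close> units
  \<open>S1 \<cdot> sgn (V k j) \<cdot> sin (w\<^sub>j \<bullet> x)\<close>, with \<open>j\<close> drawn with probability \<open>\<bar>V k j\<bar> / S1\<close>; Hoeffding's
  inequality and the probabilistic method give one draw that is \<open>\<gamma>/4\<close>-close to the network on
  all sample points and outside a set of population mass \<open>1/n\<close>. The resulting nets range over
  a finite class of size \<open>(3 G\<^sup>p)\<^sup>p\<^sup>K\<close>, whose \<open>\<gamma>/2\<close>-margin errors concentrate uniformly by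
  Hoeffding's inequality and a union bound. Closeness transfers the population error of the
  network below the cover net's margin error and the sample margin error of the cover net below
  the network's \<open>\<gamma>\<close>-margin error. Choosing \<open>G \<approx> m S1/\<gamma>\<close> and \<open>K \<approx> (S1/\<gamma>)\<^sup>2 log (p n)\<close> makes
  the deviation \<open>O~(S1 p / (\<gamma> \<surd>n))\<close>; if \<open>\<gamma> \<ge> 2 S1\<close> or this exceeds 1 the bound is trivial.
\<close>

lemma abs_sin_diff_le: "\<bar>sin a - sin b\<bar> \<le> \<bar>a - (b::real)\<bar>"
proof -
  define u v where "u = (a + b) / 2" and "v = (a - b) / 2"
  have "a = u + v" "b = u - v" unfolding u_def v_def by (simp_all add: field_simps)
  hence "sin a - sin b = 2 * cos u * sin v" by (simp add: sin_add sin_diff)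
  hence "\<bar>sin a - sin b\<bar> = 2 * \<bar>cos u\<bar> * \<bar>sin v\<bar>" by (simp add: abs_mult)
  also have "\<dots> \<le> 2 * 1 * \<bar>v\<bar>"
    by (intro mult_mono abs_sin_x_le_abs_x) auto
  finally show ?thesis unfolding v_def by simp
qed

definition grid_index :: "nat \<Rightarrow> real \<Rightarrow> nat" where
  "grid_index G w = nat (\<lfloor>w * G / (2 * pi)\<rfloor> mod int G)"

definition grid_point :: "nat \<Rightarrow> nat \<Rightarrow> real" where
  "grid_point G a = 2 * pi * real a / G"

lemma grid_index_less: "G > 0 \<Longrightarrow> grid_index G w < G"
  unfolding grid_index_def by (simp add: nat_less_iff)

lemma grid_rounding_mod_2pi:
  assumes G: "G > 0"
  obtains N :: int where "0 \<le> w - 2 * pi * N - grid_point G (grid_index G w)"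
    and "w - 2 * pi * N - grid_point G (grid_index G w) < 2 * pi / G"
proof -
  define u where "u = w * G / (2 * pi)"
  define f where "f = \<lfloor>u\<rfloor>"
  have w: "w = 2 * pi * u / G" unfolding u_def using G by (simp add: field_simps)
  have "real_of_int f = real G * of_int (f div int G) + of_int (f mod int G)"
    by (metis mult_div_mod_eq of_int_add of_int_mult of_int_of_nat_eq)
  moreover have "real (nat (f mod int G)) = of_int (f mod int G)" using G by simp
  ultimately have "w - 2 * pi * of_int (f div int G) - grid_point G (grid_index G w)
      = 2 * pi * (u - f) / G"
    unfolding grid_point_def grid_index_def u_def[symmetric] f_def[symmetric]
    using G by (subst (1) w) (simp add: field_simps)
  moreover have "0 \<le> u - f" "u - f < 1" unfolding f_def by linarith+
  ultimately show ?thesis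
    using G by (intro that[of "f div int G"]) (auto simp: divide_strict_right_mono)
qed

lemma sin_grid_rounding:
  fixes w x :: "nat \<Rightarrow> real"
  assumes G: "G > 0" and nat: "\<forall>r. x r \<in> \<nat>" and mass: "(\<Sum>r<p. x r) = real m"
  shows "\<bar>sin (\<Sum>r<p. w r * x r) - sin (\<Sum>r<p. grid_point G (grid_index G (w r)) * x r)\<bar>
           \<le> 2 * pi * m / G"
proof -
  define g where "g r = grid_point G (grid_index G (w r))" for r
  have "\<forall>r. \<exists>N::int. 0 \<le> w r - 2 * pi * N - g r \<and> w r - 2 * pi * N - g r < 2 * pi / G"
    unfolding g_def using grid_rounding_mod_2pi[OF G] by metis
  then obtain N :: "nat \<Rightarrow> int" where N: "\<And>r. 0 \<le> w r - 2 * pi * N r - g r"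
    "\<And>r. w r - 2 * pi * N r - g r < 2 * pi / G"
    by metis
  define A where "A = (\<Sum>r<p. g r * x r)"
  define B where "B = (\<Sum>r<p. (w r - 2 * pi * N r - g r) * x r)"
  define Z where "Z = (\<Sum>r<p. of_int (N r) * x r)"
  have x0: "x r \<ge> 0" for r using nat[rule_format, of r] by (auto elim: Nats_cases)
  have "Z \<in> \<int>"
    unfolding Z_def using nat Nats_subset_Ints by (intro Ints_sum Ints_mult) auto
  then obtain z where z: "Z = of_int z" by (auto elim: Ints_cases)
  have "(\<Sum>r<p. w r * x r) = (\<Sum>r<p. g r * x r + (w r - 2 * pi * N r - g r) * x r + 2 * pi * (N r * x r))"
    by (intro sum.cong) (simp_all add: algebra_simps)
  also have "\<dots> = A + B + 2 * pi * Z"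
    unfolding A_def B_def Z_def by (simp only: sum.distrib sum_distrib_left)
  finally have "sin (\<Sum>r<p. w r * x r) = sin (A + B)" by (simp add: z sin_add)
  hence "\<bar>sin (\<Sum>r<p. w r * x r) - sin A\<bar> \<le> \<bar>B\<bar>" using abs_sin_diff_le[of "A + B" A] by simp
  also have "\<bar>B\<bar> = B" unfolding B_def using N(1) x0 by (simp add: sum_nonneg)
  also have "B \<le> (\<Sum>r<p. 2 * pi / G * x r)" unfolding B_def
    using N(2) x0 by (intro sum_mono mult_right_mono) (auto simp: less_imp_le)
  also have "\<dots> = 2 * pi / G * (\<Sum>r<p. x r)" by (rule sum_distrib_left[symmetric])
  also have "\<dots> = 2 * pi * m / G" by (simp add: mass)
  finally show ?thesis unfolding A_def g_def .
qed

definition round_weights :: "nat \<Rightarrow> (nat \<Rightarrow> nat \<Rightarrow> real) \<Rightarrow> nat \<Rightarrow> nat \<Rightarrow> real" where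
  "round_weights G W j r = grid_point G (grid_index G (W j r))"

lemma abs_sine_net_round_weights_le:
  assumes "G > 0" and "\<forall>r. x r \<in> \<nat>" and "(\<Sum>r<p. x r) = real m"
  shows "\<bar>sine_net p d W V x k - sine_net p d (round_weights G W) V x k\<bar>
           \<le> (\<Sum>j<d. \<bar>V k j\<bar>) * (2 * pi * m / G)"
proof -
  have "\<bar>sine_net p d W V x k - sine_net p d (round_weights G W) V x k\<bar>
      = \<bar>\<Sum>j<d. V k j * (sin (\<Sum>r<p. W j r * x r) - sin (\<Sum>r<p. round_weights G W j r * x r))\<bar>"
    unfolding sine_net_def by (simp add: sum_subtractf algebra_simps)
  also have "\<dots> \<le> (\<Sum>j<d. \<bar>V k j\<bar> * (2 * pi * m / G))"
    unfolding round_weights_def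
    by (intro order_trans[OF sum_abs] sum_mono)
       (simp add: abs_mult mult_left_mono sin_grid_rounding[OF assms] del: times_divide_eq_right)
  also have "\<dots> = (\<Sum>j<d. \<bar>V k j\<bar>) * (2 * pi * m / G)"
    by (rule sum_distrib_right[symmetric])
  finally show ?thesis .
qed

lemma data_dist_support:
  assumes "p > 0" and "(x, y) \<in> set_pmf (data_dist p m)"
  shows "y < p" and "\<forall>r. x r \<in> \<nat>" and "(\<Sum>r<p. x r) = real m"
proof -
  obtain s where s: "s \<in> set_pmf (Pi_pmf {..<m} 0 (\<lambda>_. pmf_of_set {..<p}))"
    and x: "x = (\<lambda>r. real (card {i \<in> {..<m}. s i = r}))" and y: "y = (\<Sum>i<m. s i) mod p"
    using assms(2) unfolding data_dist_def by auto
  have s_less: "\<And>i. i < m \<Longrightarrow> s i < p"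
    using s assms(1) by (auto simp: set_Pi_pmf PiE_dflt_def lessThan_empty_iff)
  have "(\<Sum>r<p. card {i \<in> {..<m}. s i = r}) = (\<Sum>r<p. \<Sum>i\<in>{i \<in> {..<m}. s i = r}. 1::nat)"
    by simp
  also have "\<dots> = (\<Sum>i<m. 1)"
    by (rule sum.group) (use s_less in auto)
  finally show "(\<Sum>r<p. x r) = real m" unfolding x by (simp flip: of_nat_sum)
  show "y < p" using y assms(1) by simp
  show "\<forall>r. x r \<in> \<nat>" unfolding x by simp
qed

lemma sample_dist_support:
  "S \<in> set_pmf (sample_dist p m n) \<Longrightarrow> i < n \<Longrightarrow> S i \<in> set_pmf (data_dist p m)"
  by (auto simp: sample_dist_def set_Pi_pmf PiE_dflt_def)

lemma row_norm_le_mat_inf_norm: "k < p \<Longrightarrow> (\<Sum>j<d. \<bar>V k j\<bar>) \<le> mat_inf_norm p d V"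
  unfolding mat_inf_norm_def by (intro Max_ge) auto

lemma abs_sine_net_le: "\<bar>sine_net p d W V x k\<bar> \<le> (\<Sum>j<d. \<bar>V k j\<bar>)"
  unfolding sine_net_def
  by (intro order_trans[OF sum_abs] sum_mono) (simp add: abs_mult mult_left_le)

lemma Hoeffding_Pi_pmf:
  fixes D :: "'a pmf" and f :: "'a \<Rightarrow> real" and K :: nat and a b \<epsilon> :: real
  assumes K: "K > 0" and ab: "a < b" and f: "\<And>x. f x \<in> {a..b}" and \<epsilon>: "\<epsilon> \<ge> 0"
  shows Hoeffding_Pi_pmf_le:
      "measure_pmf.prob (Pi_pmf {..<K} dflt (\<lambda>_. D))
         {J. (\<Sum>t<K. f (J t)) / K \<le> measure_pmf.expectation D f - \<epsilon>}
       \<le> exp (- 2 * real K * \<epsilon>\<^sup>2 / (b - a)\<^sup>2)"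
    and Hoeffding_Pi_pmf_abs_ge:
      "measure_pmf.prob (Pi_pmf {..<K} dflt (\<lambda>_. D))
         {J. \<epsilon> \<le> \<bar>(\<Sum>t<K. f (J t)) / K - measure_pmf.expectation D f\<bar>}
       \<le> 2 * exp (- 2 * real K * \<epsilon>\<^sup>2 / (b - a)\<^sup>2)"
proof -
  define M where "M = Pi_pmf {..<K} dflt (\<lambda>_. D)"
  have component: "i < K \<Longrightarrow> map_pmf (\<lambda>J. J i) M = D" for i
    unfolding M_def by (subst Pi_pmf_component) auto
  have distr: "distr (measure_pmf M) borel (\<lambda>J. f (J i)) = distr (measure_pmf D) borel f"
    if "i < K" for i
  proof -
    have "distr (measure_pmf M) borel (\<lambda>J. f (J i))
        = distr (measure_pmf (map_pmf (\<lambda>J. J i) M)) borel f"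
      unfolding map_pmf_rep_eq by (subst distr_distr) (auto simp: o_def)
    thus ?thesis using component[OF that] by simp
  qed
  interpret Hoeffding_ineq_iid "measure_pmf M" "{..<K}" "\<lambda>i J. f (J i)" "\<lambda>J. f (J 0)" a b
    "measure_pmf.expectation D f"
  proof unfold_locales
    show "prob_space.indep_vars (measure_pmf M) (\<lambda>_. borel) (\<lambda>i J. f (J i)) {..<K}"
      unfolding M_def
      by (intro prob_space.indep_vars_compose2[OF _ indep_vars_Pi_pmf])
         (auto simp: measure_pmf.prob_space_axioms)
    show "distr (measure_pmf M) borel (\<lambda>J. f (J i)) = distr (measure_pmf M) borel (\<lambda>J. f (J 0))"
      if "i \<in> {..<K}" for i
      using distr[of i] distr[of 0] that K by simp
    have "measure_pmf.expectation M (\<lambda>J. f (J 0)) = measure_pmf.expectation (map_pmf (\<lambda>J. J 0) M) f"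
      by simp
    thus "measure_pmf.expectation D f \<equiv> measure_pmf.expectation M (\<lambda>J. f (J 0))"
      using component[of 0] K by simp
  qed (use f in simp_all)
  have "{..<K} \<noteq> {}" using K by auto
  thus "measure_pmf.prob (Pi_pmf {..<K} dflt (\<lambda>_. D))
          {J. (\<Sum>t<K. f (J t)) / K \<le> measure_pmf.expectation D f - \<epsilon>}
        \<le> exp (- 2 * real K * \<epsilon>\<^sup>2 / (b - a)\<^sup>2)"
    and "measure_pmf.prob (Pi_pmf {..<K} dflt (\<lambda>_. D))
          {J. \<epsilon> \<le> \<bar>(\<Sum>t<K. f (J t)) / K - measure_pmf.expectation D f\<bar>}
        \<le> 2 * exp (- 2 * real K * \<epsilon>\<^sup>2 / (b - a)\<^sup>2)"
    using Hoeffding_ineq_le'[of \<epsilon>] Hoeffding_ineq_abs_ge'[of \<epsilon>] \<epsilon> ab by (simp_all add: M_def)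
qed

lemma Hoeffding_union_Pi_pmf:
  fixes D :: "'z pmf" and E :: "'c \<Rightarrow> 'z set" and n :: nat
  assumes F: "finite F" and n: "n > 0" and \<epsilon>: "\<epsilon> \<ge> 0"
  shows "measure_pmf.prob (Pi_pmf {..<n} dflt (\<lambda>_. D))
           {S. \<exists>c\<in>F. real (card {i \<in> {..<n}. S i \<in> E c}) / n \<le> measure_pmf.prob D (E c) - \<epsilon>}
         \<le> card F * exp (- 2 * real n * \<epsilon>\<^sup>2)"
proof -
  let ?P = "Pi_pmf {..<n} dflt (\<lambda>_. D)"
  let ?B = "\<lambda>c. {S. real (card {i \<in> {..<n}. S i \<in> E c}) / n \<le> measure_pmf.prob D (E c) - \<epsilon>}"
  have "measure_pmf.prob ?P (?B c) \<le> exp (- 2 * real n * \<epsilon>\<^sup>2)" for c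
    using Hoeffding_Pi_pmf_le[OF n _ _ \<epsilon>, of 0 1 "indicator (E c)" dflt D]
    by (simp add: indicator_def Int_def)
  hence "measure_pmf.prob ?P (\<Union>c\<in>F. ?B c) \<le> (\<Sum>c\<in>F. exp (- 2 * real n * \<epsilon>\<^sup>2))"
    by (intro order_trans[OF measure_pmf.finite_measure_subadditive_finite[OF F]] sum_mono) auto
  thus ?thesis by (simp add: Bex_def Collect_ex_eq[symmetric] UNION_eq)
qed

lemma nn_integral_swap_pmf:
  fixes A :: "'a pmf" and B :: "'b pmf"
  shows "(\<integral>\<^sup>+a. \<integral>\<^sup>+b. f a b \<partial>B \<partial>A) = (\<integral>\<^sup>+b. \<integral>\<^sup>+a. f a b \<partial>A \<partial>B)"
proof -
  have "(\<integral>\<^sup>+a. \<integral>\<^sup>+b. f a b \<partial>B \<partial>A) = (\<integral>\<^sup>+x. f (fst x) (snd x) \<partial>pair_pmf A B)"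
    by (simp add: nn_integral_pair_pmf')
  also have "\<dots> = (\<integral>\<^sup>+x. f (snd x) (fst x) \<partial>pair_pmf B A)"
    by (subst pair_commute_pmf) (simp add: case_prod_beta)
  also have "\<dots> = (\<integral>\<^sup>+b. \<integral>\<^sup>+a. f a b \<partial>A \<partial>B)"
    by (simp add: nn_integral_pair_pmf')
  finally show ?thesis .
qed

lemma nn_integral_bad_count_le:
  fixes P :: "'j pmf" and D :: "'z pmf" and bad :: "'j \<Rightarrow> 'z \<Rightarrow> bool" and zs :: "nat \<Rightarrow> 'z"
    and n :: nat and \<eta> :: real
  assumes bad: "\<And>z. measure_pmf.prob P {J. bad J z} \<le> \<eta>"
  shows "(\<integral>\<^sup>+J. (\<Sum>i<n. indicator {J. bad J (zs i)} J) + ennreal n * emeasure D {z. bad J z} \<partial>P)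
           \<le> ennreal (2 * real n * \<eta>)"
proof -
  have \<eta>: "0 \<le> \<eta>" using bad[of undefined] measure_nonneg order_trans by blast
  have "(\<integral>\<^sup>+J. (\<Sum>i<n. indicator {J. bad J (zs i)} J) \<partial>P) = (\<Sum>i<n. emeasure P {J. bad J (zs i)})"
    by (subst nn_integral_sum) auto
  also have "\<dots> \<le> (\<Sum>i<n. ennreal \<eta>)"
    by (intro sum_mono) (simp add: measure_pmf.emeasure_eq_measure bad ennreal_leI)
  finally have sample: "(\<integral>\<^sup>+J. (\<Sum>i<n. indicator {J. bad J (zs i)} J) \<partial>P) \<le> ennreal n * ennreal \<eta>"
    by (simp add: ennreal_of_nat_eq_real_of_nat)
  have "(\<integral>\<^sup>+J. emeasure D {z. bad J z} \<partial>P) = (\<integral>\<^sup>+z. emeasure P {J. bad J z} \<partial>D)"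
    using nn_integral_swap_pmf[where A = P and B = D and f = "\<lambda>J z. indicator {z. bad J z} z"]
    by (simp add: indicator_def flip: nn_integral_indicator)
  also have "\<dots> \<le> (\<integral>\<^sup>+z. ennreal \<eta> \<partial>D)"
    by (intro nn_integral_mono) (simp add: measure_pmf.emeasure_eq_measure bad ennreal_leI)
  finally have population: "(\<integral>\<^sup>+J. emeasure D {z. bad J z} \<partial>P) \<le> ennreal \<eta>"
    by simp
  have "(\<integral>\<^sup>+J. (\<Sum>i<n. indicator {J. bad J (zs i)} J) + ennreal n * emeasure D {z. bad J z} \<partial>P)
      = (\<integral>\<^sup>+J. (\<Sum>i<n. indicator {J. bad J (zs i)} J) \<partial>P) + ennreal n * (\<integral>\<^sup>+J. emeasure D {z. bad J z} \<partial>P)"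
    by (subst nn_integral_add) (auto simp: nn_integral_cmult)
  also have "\<dots> \<le> ennreal n * ennreal \<eta> + ennreal n * ennreal \<eta>"
    by (intro add_mono sample mult_left_mono population) auto
  also have "\<dots> = 2 * (ennreal n * ennreal \<eta>)"
    by (rule mult_2[symmetric])
  also have "\<dots> = ennreal (2 * real n * \<eta>)"
    using \<eta> by (simp add: ennreal_mult' mult.assoc)
  finally show ?thesis .
qed

text \<open>The probabilistic method: the bound holds on average over \<open>J \<sim> P\<close>, hence for some \<open>J\<close>.\<close>

lemma exists_rarely_bad_param:
  fixes P :: "'j pmf" and D :: "'z pmf" and bad :: "'j \<Rightarrow> 'z \<Rightarrow> bool" and zs :: "nat \<Rightarrow> 'z"
    and n :: nat and \<eta> c :: real
  assumes bad: "\<And>z. measure_pmf.prob P {J. bad J z} \<le> \<eta>" and c: "2 * real n * \<eta> < c"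
  shows "\<exists>J. card {i \<in> {..<n}. bad J (zs i)} + n * measure_pmf.prob D {z. bad J z} < c"
proof (rule ccontr)
  assume contra: "\<not> ?thesis"
  have ge: "ennreal c \<le> (\<Sum>i<n. indicator {J. bad J (zs i)} J) + ennreal n * emeasure D {z. bad J z}"
    for J
  proof -
    have "ennreal c \<le> ennreal (card {i \<in> {..<n}. bad J (zs i)} + n * measure_pmf.prob D {z. bad J z})"
      using contra by (intro ennreal_leI) (meson not_less)
    also have "\<dots> = (\<Sum>i<n. indicator {J. bad J (zs i)} J) + ennreal n * emeasure D {z. bad J z}"
      by (simp add: ennreal_plus ennreal_mult' measure_pmf.emeasure_eq_measure indicator_def Int_def
          ennreal_of_nat_eq_real_of_nat flip: sum_ennreal)
    finally show ?thesis .
  qed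
  have "ennreal c = (\<integral>\<^sup>+J. ennreal c \<partial>P)" by simp
  also have "\<dots> \<le> (\<integral>\<^sup>+J. (\<Sum>i<n. indicator {J. bad J (zs i)} J) + ennreal n * emeasure D {z. bad J z} \<partial>P)"
    using ge by (rule nn_integral_mono)
  also have "\<dots> \<le> ennreal (2 * real n * \<eta>)" by (rule nn_integral_bad_count_le[OF bad])
  finally have "ennreal c \<le> ennreal (2 * real n * \<eta>)" .
  moreover have "0 \<le> \<eta>" using bad[of undefined] measure_nonneg order_trans by blast
  ultimately have "c \<le> 2 * real n * \<eta>" by (simp add: ennreal_le_iff)
  thus False using c by linarith
qed

text \<open>Maurey's sampling distribution for a row \<open>v\<close> with \<open>\<parallel>v\<parallel>\<^sub>1 \<le> S1\<close>: hidden unit \<open>j < d\<close> is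
  drawn with probability \<open>\<bar>v j\<bar> / S1\<close>, and the remaining mass sits on the dummy index \<open>d\<close>.\<close>

definition unit_weights :: "nat \<Rightarrow> real \<Rightarrow> (nat \<Rightarrow> real) \<Rightarrow> nat \<Rightarrow> real" where
  "unit_weights d S1 v j =
     (if j < d then \<bar>v j\<bar> / S1 else if j = d then 1 - (\<Sum>i<d. \<bar>v i\<bar>) / S1 else 0)"

definition unit_pmf :: "nat \<Rightarrow> real \<Rightarrow> (nat \<Rightarrow> real) \<Rightarrow> nat pmf" where
  "unit_pmf d S1 v = embed_pmf (unit_weights d S1 v)"

lemma pmf_unit_pmf:
  assumes S1: "S1 > 0" and v: "(\<Sum>i<d. \<bar>v i\<bar>) \<le> S1"
  shows "pmf (unit_pmf d S1 v) j = unit_weights d S1 v j"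
proof -
  have nonneg: "\<forall>j. 0 \<le> unit_weights d S1 v j" using S1 v by (auto simp: unit_weights_def)
  have "(\<Sum>j\<in>{..d}. unit_weights d S1 v j) = (\<Sum>j<d. unit_weights d S1 v j) + unit_weights d S1 v d"
    by (simp add: lessThan_Suc_atMost[symmetric])
  also have "\<dots> = 1" using S1 by (simp add: unit_weights_def sum_divide_distrib)
  finally have sum1: "(\<Sum>j\<in>{..d}. unit_weights d S1 v j) = 1" .
  have "(\<integral>\<^sup>+j. ennreal (unit_weights d S1 v j) \<partial>count_space UNIV)
      = (\<integral>\<^sup>+j. ennreal (unit_weights d S1 v j) * indicator {..d} j \<partial>count_space UNIV)"
    by (intro nn_integral_cong) (auto simp: unit_weights_def indicator_def)
  also have "\<dots> = (\<Sum>j\<in>{..d}. ennreal (unit_weights d S1 v j))"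
    by (simp add: nn_integral_count_space_indicator[symmetric] nn_integral_count_space_finite)
  also have "\<dots> = 1" using nonneg sum1 by simp
  finally have "(\<integral>\<^sup>+j. ennreal (unit_weights d S1 v j) \<partial>count_space UNIV) = 1" .
  thus ?thesis unfolding unit_pmf_def using nonneg by (subst pmf_embed_pmf) auto
qed

lemma expectation_unit_pmf:
  assumes "S1 > 0" and "(\<Sum>i<d. \<bar>v i\<bar>) \<le> S1" and "f d = 0"
  shows "measure_pmf.expectation (unit_pmf d S1 v) f = (\<Sum>j<d. \<bar>v j\<bar> / S1 * f j)"
proof -
  have "measure_pmf.expectation (unit_pmf d S1 v) f = (\<Sum>j<d. f j * pmf (unit_pmf d S1 v) j)"
  proof (rule integral_measure_pmf_real)
    fix j assume "j \<in> set_pmf (unit_pmf d S1 v)" "f j \<noteq> 0"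
    thus "j \<in> {..<d}"
      using assms pmf_unit_pmf[OF assms(1,2)] by (auto simp: set_pmf_eq unit_weights_def split: if_splits)
  qed simp
  thus ?thesis using pmf_unit_pmf[OF assms(1,2)] by (simp add: unit_weights_def mult.commute)
qed

definition sampled_unit :: "nat \<Rightarrow> nat \<Rightarrow> real \<Rightarrow> (nat \<Rightarrow> nat \<Rightarrow> real) \<Rightarrow> (nat \<Rightarrow> nat \<Rightarrow> real)
    \<Rightarrow> nat \<Rightarrow> (nat \<Rightarrow> real) \<Rightarrow> nat \<Rightarrow> real" where
  "sampled_unit p d S1 W V k x j = (if j < d then S1 * sgn (V k j) * sin (\<Sum>r<p. W j r * x r) else 0)"

lemma sampled_unit_bounds:
  assumes "S1 \<ge> 0"
  shows "sampled_unit p d S1 W V k x j \<in> {-S1..S1}"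
proof -
  have "\<bar>sampled_unit p d S1 W V k x j\<bar> \<le> S1"
    unfolding sampled_unit_def using assms
    by (auto simp: abs_mult abs_sgn_eq intro: mult_left_le)
  thus ?thesis by (simp add: abs_le_iff)
qed

lemma expectation_sampled_unit:
  assumes S1: "S1 > 0" and row: "(\<Sum>j<d. \<bar>V k j\<bar>) \<le> S1"
  shows "measure_pmf.expectation (unit_pmf d S1 (V k)) (sampled_unit p d S1 W V k x)
           = sine_net p d W V x k"
proof -
  have "\<bar>V k j\<bar> / S1 * sampled_unit p d S1 W V k x j = V k j * sin (\<Sum>r<p. W j r * x r)"
    if "j < d" for j
  proof -
    have "\<bar>V k j\<bar> / S1 * sampled_unit p d S1 W V k x j
        = (sgn (V k j) * \<bar>V k j\<bar>) * sin (\<Sum>r<p. W j r * x r)"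
      using that S1 by (simp add: sampled_unit_def)
    thus ?thesis by (simp only: sgn_mult_abs)
  qed
  moreover have "measure_pmf.expectation (unit_pmf d S1 (V k)) (sampled_unit p d S1 W V k x)
      = (\<Sum>j<d. \<bar>V k j\<bar> / S1 * sampled_unit p d S1 W V k x j)"
    by (rule expectation_unit_pmf[OF S1 row]) (simp add: sampled_unit_def)
  ultimately show ?thesis unfolding sine_net_def by simp
qed

lemma prob_sampled_average_far:
  assumes K: "K > 0" and S1: "S1 > 0" and row: "(\<Sum>j<d. \<bar>V k j\<bar>) \<le> S1" and \<epsilon>: "\<epsilon> \<ge> 0"
  shows "measure_pmf.prob (Pi_pmf {..<K} dflt (\<lambda>_. unit_pmf d S1 (V k)))
           {J. \<epsilon> \<le> \<bar>(\<Sum>t<K. sampled_unit p d S1 W V k x (J t)) / K - sine_net p d W V x k\<bar>}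
         \<le> 2 * exp (- real K * \<epsilon>\<^sup>2 / (2 * S1\<^sup>2))"
proof -
  have bounds: "\<And>j. sampled_unit p d S1 W V k x j \<in> {-S1..S1}"
    using S1 by (intro sampled_unit_bounds) simp
  have "- 2 * real K * \<epsilon>\<^sup>2 / (S1 - - S1)\<^sup>2 = - real K * \<epsilon>\<^sup>2 / (2 * S1\<^sup>2)"
    using S1 by (simp add: power2_eq_square field_simps)
  moreover have "- S1 < S1" using S1 by simp
  ultimately show ?thesis
    using Hoeffding_Pi_pmf_abs_ge[where f = "sampled_unit p d S1 W V k x" and D = "unit_pmf d S1 (V k)",
        OF K _ bounds \<epsilon>]
    by (simp add: expectation_sampled_unit[of S1 V k d, OF S1 row])
qed

lemma exists_sampled_units_close:
  fixes D :: "((nat \<Rightarrow> real) \<times> nat) pmf" and zs :: "nat \<Rightarrow> (nat \<Rightarrow> real) \<times> nat"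
    and W V :: "nat \<Rightarrow> nat \<Rightarrow> real" and p :: nat
  assumes K: "K > 0" and S1: "S1 > 0" and row: "(\<Sum>j<d. \<bar>V k j\<bar>) \<le> S1" and \<epsilon>: "\<epsilon> \<ge> 0"
    and c: "4 * real n * exp (- real K * \<epsilon>\<^sup>2 / (2 * S1\<^sup>2)) < c"
  defines "far \<equiv> \<lambda>J z. \<epsilon> \<le> \<bar>(\<Sum>t<K. sampled_unit p d S1 W V k (fst z) (J t)) / K
                                - sine_net p d W V (fst z) k\<bar>"
  shows "\<exists>J. card {i \<in> {..<n}. far J (zs i)} + n * measure_pmf.prob D {z. far J z} < c"
proof (rule exists_rarely_bad_param)
  show "measure_pmf.prob (Pi_pmf {..<K} 0 (\<lambda>_. unit_pmf d S1 (V k))) {J. far J z}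
        \<le> 2 * exp (- real K * \<epsilon>\<^sup>2 / (2 * S1\<^sup>2))" for z
    unfolding far_def by (rule prob_sampled_average_far[where V = V and k = k, OF K S1 row \<epsilon>])
  show "2 * real n * (2 * exp (- real K * \<epsilon>\<^sup>2 / (2 * S1\<^sup>2))) < c"
    using c by simp
qed

text \<open>\<open>c (k, t)\<close> records the sign and the grid indices of the first-layer row of the \<open>t\<close>-th
  unit sampled for output \<open>k\<close>.\<close>

definition cover_params :: "nat \<Rightarrow> nat \<Rightarrow> nat \<Rightarrow> (nat \<times> nat \<Rightarrow> real \<times> (nat \<Rightarrow> nat)) set" where
  "cover_params p K G = PiE ({..<p} \<times> {..<K}) (\<lambda>_. {-1, 0, 1} \<times> PiE {..<p} (\<lambda>_. {..<G}))"

definition cover_net :: "nat \<Rightarrow> nat \<Rightarrow> real \<Rightarrow> nat \<Rightarrow> (nat \<times> nat \<Rightarrow> real \<times> (nat \<Rightarrow> nat))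
    \<Rightarrow> (nat \<Rightarrow> real) \<Rightarrow> nat \<Rightarrow> real" where
  "cover_net p K S1 G c x k =
     S1 / K * (\<Sum>t<K. fst (c (k, t)) * sin (\<Sum>r<p. grid_point G (snd (c (k, t)) r) * x r))"

definition cover_param_of :: "nat \<Rightarrow> nat \<Rightarrow> nat \<Rightarrow> nat \<Rightarrow> (nat \<Rightarrow> nat \<Rightarrow> real) \<Rightarrow> (nat \<Rightarrow> nat \<Rightarrow> real)
    \<Rightarrow> (nat \<Rightarrow> nat \<Rightarrow> nat) \<Rightarrow> nat \<times> nat \<Rightarrow> real \<times> (nat \<Rightarrow> nat)" where
  "cover_param_of p d K G W V J = restrict (\<lambda>(k, t).
     (if J k t < d then sgn (V k (J k t)) else 0, restrict (\<lambda>r. grid_index G (W (J k t) r)) {..<p}))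
     ({..<p} \<times> {..<K})"

lemma cover_param_of_mem: "G > 0 \<Longrightarrow> cover_param_of p d K G W V J \<in> cover_params p K G"
  by (auto simp: cover_param_of_def cover_params_def grid_index_less sgn_if split: if_splits)

lemma cover_net_cover_param_of:
  assumes "k < p"
  shows "cover_net p K S1 G (cover_param_of p d K G W V J) x k
           = (\<Sum>t<K. sampled_unit p d S1 (round_weights G W) V k x (J k t)) / K"
proof -
  let ?c = "cover_param_of p d K G W V J"
  have "sampled_unit p d S1 (round_weights G W) V k x (J k t)
      = S1 * (fst (?c (k, t)) * sin (\<Sum>r<p. grid_point G (snd (?c (k, t)) r) * x r))"
    if "t < K" for t
    using assms that by (simp add: cover_param_of_def sampled_unit_def round_weights_def)
  hence "(\<Sum>t<K. sampled_unit p d S1 (round_weights G W) V k x (J k t))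
      = S1 * (\<Sum>t<K. fst (?c (k, t)) * sin (\<Sum>r<p. grid_point G (snd (?c (k, t)) r) * x r))"
    by (simp add: sum_distrib_left)
  thus ?thesis unfolding cover_net_def by simp
qed

lemma finite_cover_params: "finite (cover_params p K G)"
  unfolding cover_params_def by (intro finite_PiE finite_cartesian_product) auto

lemma card_cover_params: "card (cover_params p K G) = (3 * G ^ p) ^ (p * K)"
proof -
  have "card (cover_params p K G)
      = (\<Prod>_\<in>{..<p} \<times> {..<K}. card ({-1, 0, 1 :: real} \<times> PiE {..<p} (\<lambda>_. {..<G})))"
    unfolding cover_params_def by (rule card_PiE) simp
  also have "card ({-1, 0, 1 :: real} \<times> PiE {..<p} (\<lambda>_. {..<G})) = 3 * G ^ p"
    by (simp add: card_cartesian_product card_PiE)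
  finally show ?thesis by (simp only: prod_constant card_cartesian_product card_lessThan)
qed

lemma exists_sampled_units_all_rows:
  fixes D :: "((nat \<Rightarrow> real) \<times> nat) pmf" and zs :: "nat \<Rightarrow> (nat \<Rightarrow> real) \<times> nat"
    and W V :: "nat \<Rightarrow> nat \<Rightarrow> real"
  assumes p: "p > 0" and n: "n > 0" and K: "K > 0" and S1: "S1 > 0" and \<epsilon>: "\<epsilon> \<ge> 0"
    and rows: "\<forall>k<p. (\<Sum>j<d. \<bar>V k j\<bar>) \<le> S1"
    and few: "8 * real p * real n * exp (- real K * \<epsilon>\<^sup>2 / (2 * S1\<^sup>2)) \<le> 1"
  defines "far \<equiv> \<lambda>k J z. \<epsilon> \<le> \<bar>(\<Sum>t<K. sampled_unit p d S1 W V k (fst z) (J t)) / K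
                                  - sine_net p d W V (fst z) k\<bar>"
  shows "\<exists>J. (\<forall>k<p. \<forall>i<n. \<not> far k (J k) (zs i))
             \<and> measure_pmf.prob D (\<Union>k<p. {z. far k (J k) z}) \<le> 1 / n"
proof -
  have bound: "4 * real n * exp (- real K * \<epsilon>\<^sup>2 / (2 * S1\<^sup>2)) < 1 / p"
    using few p by (simp add: field_simps)
  have "\<exists>J. card {i \<in> {..<n}. far k J (zs i)} + n * measure_pmf.prob D {z. far k J z} < 1 / p"
    if "k < p" for k
    unfolding far_def using rows that by (intro exists_sampled_units_close[OF K S1 _ \<epsilon> bound]) simp
  then obtain J where J: "\<And>k. k < p \<Longrightarrow>
      card {i \<in> {..<n}. far k (J k) (zs i)} + n * measure_pmf.prob D {z. far k (J k) z} < 1 / p"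
    by metis
  have "card {i \<in> {..<n}. far k (J k) (zs i)} = 0" if "k < p" for k
  proof -
    have "1 / real p \<le> 1" using p by simp
    moreover have "0 \<le> n * measure_pmf.prob D {z. far k (J k) z}" by simp
    ultimately have "real (card {i \<in> {..<n}. far k (J k) (zs i)}) < 1" using J[OF that] by linarith
    thus ?thesis by simp
  qed
  hence sample: "\<forall>k<p. \<forall>i<n. \<not> far k (J k) (zs i)" by auto
  have "measure_pmf.prob D (\<Union>k<p. {z. far k (J k) z}) \<le> (\<Sum>k<p. measure_pmf.prob D {z. far k (J k) z})"
    by (rule measure_pmf.finite_measure_subadditive_finite) auto
  also have "\<dots> \<le> (\<Sum>k<p. 1 / (p * n))"
  proof (rule sum_mono)
    fix k assume "k \<in> {..<p}"
    hence "n * measure_pmf.prob D {z. far k (J k) z} < 1 / p" using J[of k] by simp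
    hence "measure_pmf.prob D {z. far k (J k) z} * n < 1 / p" by (simp add: mult.commute)
    hence "measure_pmf.prob D {z. far k (J k) z} < 1 / p / n"
      using n by (simp only: pos_less_divide_eq of_nat_0_less_iff)
    thus "measure_pmf.prob D {z. far k (J k) z} \<le> 1 / (p * n)" by simp
  qed
  also have "\<dots> = 1 / n" using p by simp
  finally show ?thesis using sample by blast
qed

lemma abs_sine_net_round_weights_le_on_support:
  assumes p: "p > 0" and G: "G > 0" and grid: "2 * pi * m / G * S1 \<le> \<gamma> / 8"
    and V: "mat_inf_norm p d V \<le> S1" and z: "z \<in> set_pmf (data_dist p m)" and k: "k < p"
  shows "\<bar>sine_net p d W V (fst z) k - sine_net p d (round_weights G W) V (fst z) k\<bar> \<le> \<gamma> / 8"
proof -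
  have x: "\<forall>r. fst z r \<in> \<nat>" "(\<Sum>r<p. fst z r) = real m"
    using data_dist_support[OF p, of "fst z" "snd z"] z by simp_all
  have "\<bar>sine_net p d W V (fst z) k - sine_net p d (round_weights G W) V (fst z) k\<bar>
      \<le> (\<Sum>j<d. \<bar>V k j\<bar>) * (2 * pi * m / G)"
    by (rule abs_sine_net_round_weights_le[OF G x])
  also have "\<dots> \<le> S1 * (2 * pi * m / G)"
    using row_norm_le_mat_inf_norm[OF k, where d = d and V = V] V by (intro mult_right_mono) auto
  also have "\<dots> \<le> \<gamma> / 8" using grid by (simp add: mult.commute)
  finally show ?thesis .
qed

lemma exists_cover_net_close:
  fixes S :: "nat \<Rightarrow> (nat \<Rightarrow> real) \<times> nat" and W V :: "nat \<Rightarrow> nat \<Rightarrow> real"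
  assumes p: "p > 0" and n: "n > 0" and K: "K > 0" and G: "G > 0" and S1: "S1 > 0"
    and grid: "2 * pi * m / G * S1 \<le> \<gamma> / 8"
    and few: "8 * real p * real n * exp (- real K * (\<gamma> / 8)\<^sup>2 / (2 * S1\<^sup>2)) \<le> 1"
    and V: "mat_inf_norm p d V \<le> S1" and S: "\<forall>i<n. S i \<in> set_pmf (data_dist p m)"
  defines "far \<equiv> \<lambda>c z. \<exists>k<p. \<gamma> / 4 \<le> \<bar>sine_net p d W V (fst z) k - cover_net p K S1 G c (fst z) k\<bar>"
  shows "\<exists>c\<in>cover_params p K G. (\<forall>i<n. \<not> far c (S i))
           \<and> measure_pmf.prob (data_dist p m) {z. far c z} \<le> 1 / n"
proof -
  define W' where "W' = round_weights G W"
  define far' where "far' k J z \<longleftrightarrow> \<gamma> / 8 \<le> \<bar>(\<Sum>t<K. sampled_unit p d S1 W' V k (fst z) (J t)) / K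
                                     - sine_net p d W' V (fst z) k\<bar>"
    for k J and z :: "(nat \<Rightarrow> real) \<times> nat"
  have rows: "\<forall>k<p. (\<Sum>j<d. \<bar>V k j\<bar>) \<le> S1"
    using row_norm_le_mat_inf_norm V order_trans by blast
  have "0 \<le> 2 * pi * m / G * S1" using S1 by simp
  hence "\<gamma> / 8 \<ge> 0" using grid by linarith
  from exists_sampled_units_all_rows[OF p n K S1 this rows few, of W' S "data_dist p m"]
  obtain J where sample: "\<forall>k<p. \<forall>i<n. \<not> far' k (J k) (S i)"
    and population: "measure_pmf.prob (data_dist p m) (\<Union>k<p. {z. far' k (J k) z}) \<le> 1 / n"
    unfolding far'_def by blast
  define c where "c = cover_param_of p d K G W V J"
  have near: "\<not> far c z" if z: "z \<in> set_pmf (data_dist p m)" and "\<forall>k<p. \<not> far' k (J k) z" for z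
  proof -
    have "\<bar>sine_net p d W V (fst z) k - cover_net p K S1 G c (fst z) k\<bar> < \<gamma> / 4" if k: "k < p" for k
    proof -
      have "\<bar>cover_net p K S1 G c (fst z) k - sine_net p d W' V (fst z) k\<bar> < \<gamma> / 8"
        using \<open>\<forall>k<p. \<not> far' k (J k) z\<close> k
        unfolding far'_def c_def W'_def cover_net_cover_param_of[OF k] by auto
      thus ?thesis using abs_sine_net_round_weights_le_on_support[OF p G grid V z k, of W]
        unfolding W'_def by arith
    qed
    thus ?thesis unfolding far_def by (auto simp: not_le)
  qed
  show ?thesis
  proof (intro bexI conjI)
    show "c \<in> cover_params p K G" unfolding c_def using G by (rule cover_param_of_mem)
    show "\<forall>i<n. \<not> far c (S i)" using near S sample by blast
    have "{z. far c z} \<inter> set_pmf (data_dist p m) \<subseteq> (\<Union>k<p. {z. far' k (J k) z})" using near by blast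
    hence "measure_pmf.prob (data_dist p m) {z. far c z}
        \<le> measure_pmf.prob (data_dist p m) (\<Union>k<p. {z. far' k (J k) z})"
      by (subst measure_Int_set_pmf[symmetric]) (rule measure_pmf.finite_measure_mono, auto)
    thus "measure_pmf.prob (data_dist p m) {z. far c z} \<le> 1 / n" using population by linarith
  qed
qed

text \<open>Being \<open>\<gamma>/4\<close>-close to the network, the cover net's \<open>\<gamma>/2\<close>-margin errors sit between the
  network's misclassifications and its \<open>\<gamma>\<close>-margin errors.\<close>

definition margin_event :: "nat \<Rightarrow> real \<Rightarrow> ((nat \<Rightarrow> real) \<Rightarrow> nat \<Rightarrow> real) \<Rightarrow> ((nat \<Rightarrow> real) \<times> nat) set" where
  "margin_event p \<mu> t = {(x, y). \<exists>k<p. k \<noteq> y \<and> t x y \<le> \<mu> + t x k}"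

lemma not_predicts_imp_margin_violation:
  fixes s t :: "nat \<Rightarrow> real"
  assumes close: "\<forall>k<p. \<bar>s k - t k\<bar> < \<gamma> / 4" and y: "y < p" and wrong: "\<not> predicts p s y"
  shows "\<exists>k<p. k \<noteq> y \<and> t y \<le> \<gamma> / 2 + t k"
proof -
  obtain k where k: "k < p" "k \<noteq> y" "s y \<le> s k"
    using wrong y unfolding predicts_def by (auto simp: not_less)
  have "t y \<le> \<gamma> / 2 + t k"
    using close[rule_format, OF y] close[rule_format, OF k(1)] k(3) by arith
  thus ?thesis using k by blast
qed

lemma margin_violation_transfer:
  fixes s t :: "nat \<Rightarrow> real"
  assumes close: "\<forall>k<p. \<bar>s k - t k\<bar> < \<gamma> / 4" and y: "y < p" and k: "k < p" "k \<noteq> y"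
    and violation: "t y \<le> \<gamma> / 2 + t k"
  shows "s y \<le> \<gamma> + Max (s ` ({..<p} - {y}))"
proof -
  have "s k \<le> Max (s ` ({..<p} - {y}))" using k by (intro Max_ge) auto
  thus ?thesis using close[rule_format, OF y] close[rule_format, OF k(1)] violation by arith
qed

lemma pop_error_le_margin_event:
  fixes t :: "(nat \<Rightarrow> real) \<Rightarrow> nat \<Rightarrow> real" and W V :: "nat \<Rightarrow> nat \<Rightarrow> real" and d :: nat
    and \<gamma> :: real
  assumes p: "p > 0"
  defines "far \<equiv> \<lambda>z. \<exists>k<p. \<gamma> / 4 \<le> \<bar>sine_net p d W V (fst z) k - t (fst z) k\<bar>"
  shows "pop_error p m d W V
           \<le> measure_pmf.prob (data_dist p m) (margin_event p (\<gamma> / 2) t)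
             + measure_pmf.prob (data_dist p m) {z. far z}"
proof -
  let ?D = "data_dist p m"
  have "z \<in> margin_event p (\<gamma> / 2) t"
    if "z \<in> set_pmf ?D" "\<not> far z" "\<not> predicts p (sine_net p d W V (fst z)) (snd z)" for z
    using not_predicts_imp_margin_violation[OF _ data_dist_support(1)[OF p, of "fst z" "snd z"]] that
    unfolding far_def margin_event_def by (auto simp: case_prod_beta not_le)
  hence "{(x, y). \<not> predicts p (sine_net p d W V x) y} \<inter> set_pmf ?D
      \<subseteq> margin_event p (\<gamma> / 2) t \<union> {z. far z}"
    by fastforce
  hence "pop_error p m d W V \<le> measure_pmf.prob ?D (margin_event p (\<gamma> / 2) t \<union> {z. far z})"
    unfolding pop_error_def
    by (subst measure_Int_set_pmf[symmetric]) (rule measure_pmf.finite_measure_mono, auto)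
  thus ?thesis using measure_Un_le[of "margin_event p (\<gamma> / 2) t" ?D "{z. far z}"] by simp
qed

lemma freq_margin_event_le_margin_error:
  fixes t :: "(nat \<Rightarrow> real) \<Rightarrow> nat \<Rightarrow> real" and S :: "nat \<Rightarrow> (nat \<Rightarrow> real) \<times> nat"
  assumes p: "p > 0" and S: "\<forall>i<n. S i \<in> set_pmf (data_dist p m)"
    and close: "\<forall>i<n. \<forall>k<p. \<bar>sine_net p d W V (fst (S i)) k - t (fst (S i)) k\<bar> < \<gamma> / 4"
  shows "card {i \<in> {..<n}. S i \<in> margin_event p (\<gamma> / 2) t} / n \<le> margin_error p d W V \<gamma> n S"
proof -
  let ?s = "sine_net p d W V"
  have "?s (fst (S i)) (snd (S i)) \<le> \<gamma> + Max (?s (fst (S i)) ` ({..<p} - {snd (S i)}))"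
    if i: "i < n" and "S i \<in> margin_event p (\<gamma> / 2) t" for i
  proof -
    obtain k where "k < p" "k \<noteq> snd (S i)" "t (fst (S i)) (snd (S i)) \<le> \<gamma> / 2 + t (fst (S i)) k"
      using \<open>S i \<in> margin_event p (\<gamma> / 2) t\<close> unfolding margin_event_def by (auto simp: case_prod_beta)
    moreover have "snd (S i) < p"
      using data_dist_support(1)[OF p, of "fst (S i)" "snd (S i)" m] S i by simp
    ultimately show ?thesis using close i by (intro margin_violation_transfer[of p _ _ \<gamma>]) auto
  qed
  hence "{i \<in> {..<n}. S i \<in> margin_event p (\<gamma> / 2) t}
      \<subseteq> {i \<in> {..<n}. ?s (fst (S i)) (snd (S i)) \<le> \<gamma> + Max (?s (fst (S i)) ` ({..<p} - {snd (S i)}))}"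
    by blast
  thus ?thesis unfolding margin_error_def by (intro divide_right_mono of_nat_mono card_mono) auto
qed

lemma pop_error_le_on_good_sample:
  fixes S :: "nat \<Rightarrow> (nat \<Rightarrow> real) \<times> nat" and W V :: "nat \<Rightarrow> nat \<Rightarrow> real"
  assumes p: "p > 0" and n: "n > 0" and K: "K > 0" and G: "G > 0" and S1: "S1 > 0"
    and grid: "2 * pi * m / G * S1 \<le> \<gamma> / 8"
    and few: "8 * real p * real n * exp (- real K * (\<gamma> / 8)\<^sup>2 / (2 * S1\<^sup>2)) \<le> 1"
    and V: "mat_inf_norm p d V \<le> S1" and S: "\<forall>i<n. S i \<in> set_pmf (data_dist p m)"
    and good: "\<forall>c\<in>cover_params p K G.
                 measure_pmf.prob (data_dist p m) (margin_event p (\<gamma> / 2) (cover_net p K S1 G c)) - \<epsilon>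
                 < card {i \<in> {..<n}. S i \<in> margin_event p (\<gamma> / 2) (cover_net p K S1 G c)} / n"
  shows "pop_error p m d W V \<le> margin_error p d W V \<gamma> n S + \<epsilon> + 1 / n"
proof -
  obtain c where c: "c \<in> cover_params p K G"
    and sample: "\<forall>i<n. \<forall>k<p. \<bar>sine_net p d W V (fst (S i)) k - cover_net p K S1 G c (fst (S i)) k\<bar> < \<gamma> / 4"
    and population: "measure_pmf.prob (data_dist p m)
      {z. \<exists>k<p. \<gamma> / 4 \<le> \<bar>sine_net p d W V (fst z) k - cover_net p K S1 G c (fst z) k\<bar>} \<le> 1 / n"
    using exists_cover_net_close[OF p n K G S1 grid few V S, where W = W] by (auto simp: not_le)
  show ?thesis
    using pop_error_le_margin_event[OF p, where t = "cover_net p K S1 G c" and W = W and V = V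
        and d = d and \<gamma> = \<gamma> and m = m] population
      freq_margin_event_le_margin_error[OF p S sample] good c by fastforce
qed

definition uniform_margin_bound :: "nat \<Rightarrow> nat \<Rightarrow> nat \<Rightarrow> real \<Rightarrow> real \<Rightarrow> nat \<Rightarrow> real
    \<Rightarrow> (nat \<Rightarrow> (nat \<Rightarrow> real) \<times> nat) \<Rightarrow> bool" where
  "uniform_margin_bound p m d S1 \<gamma> n \<epsilon> S \<longleftrightarrow>
     (\<forall>W V. mat_inf_norm p d V \<le> S1 \<longrightarrow> pop_error p m d W V \<le> margin_error p d W V \<gamma> n S + \<epsilon>)"

lemma measure_pmf_prob_ge_outside:
  assumes "\<forall>x\<in>set_pmf M. x \<notin> B \<longrightarrow> x \<in> A" and "measure_pmf.prob M B \<le> \<delta>"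
  shows "1 - \<delta> \<le> measure_pmf.prob M A"
proof -
  have "- A \<inter> set_pmf M \<subseteq> B" using assms(1) by blast
  hence "measure_pmf.prob M (- A) \<le> measure_pmf.prob M B"
    by (subst measure_Int_set_pmf[symmetric]) (rule measure_pmf.finite_measure_mono, auto)
  moreover have "measure_pmf.prob M (- A) = 1 - measure_pmf.prob M A"
    using measure_pmf.prob_compl[of A M] by (simp add: Compl_eq_Diff_UNIV)
  ultimately show ?thesis using assms(2) by linarith
qed

lemma prob_uniform_margin_bound_cover:
  assumes p: "p > 0" and n: "n > 0" and K: "K > 0" and G: "G > 0" and S1: "S1 > 0"
    and grid: "2 * pi * m / G * S1 \<le> \<gamma> / 8"
    and few: "8 * real p * real n * exp (- real K * (\<gamma> / 8)\<^sup>2 / (2 * S1\<^sup>2)) \<le> 1"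
    and \<delta>: "0 < \<delta>" "\<delta> \<le> 1"
  defines "\<epsilon> \<equiv> sqrt (ln (card (cover_params p K G) / \<delta>) / (2 * n))"
  shows "1 - \<delta> \<le> measure_pmf.prob (sample_dist p m n) {S. uniform_margin_bound p m d S1 \<gamma> n (\<epsilon> + 1 / n) S}"
proof -
  let ?E = "\<lambda>c. margin_event p (\<gamma> / 2) (cover_net p K S1 G c)" and ?D = "data_dist p m"
  define N where "N = card (cover_params p K G)"
  have "1 \<le> 3 * G ^ p" using G by (simp add: Suc_leI)
  hence "1 \<le> N" unfolding N_def card_cover_params by (rule one_le_power)
  hence "1 \<le> real N" by simp
  hence lnN: "0 \<le> ln (N / \<delta>)" using \<delta> by (simp add: field_simps)
  hence \<epsilon>0: "\<epsilon> \<ge> 0" unfolding \<epsilon>_def N_def by simp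
  define Bad where "Bad = {S. \<exists>c\<in>cover_params p K G.
      real (card {i \<in> {..<n}. S i \<in> ?E c}) / n \<le> measure_pmf.prob ?D (?E c) - \<epsilon>}"
  have "measure_pmf.prob (sample_dist p m n) Bad \<le> N * exp (- 2 * real n * \<epsilon>\<^sup>2)"
    unfolding Bad_def sample_dist_def N_def by (rule Hoeffding_union_Pi_pmf[OF finite_cover_params n \<epsilon>0])
  also have "\<dots> = \<delta>"
    using lnN n \<open>1 \<le> real N\<close> \<delta> unfolding \<epsilon>_def N_def[symmetric] by (simp add: exp_minus field_simps)
  finally have "measure_pmf.prob (sample_dist p m n) Bad \<le> \<delta>" .
  moreover have "uniform_margin_bound p m d S1 \<gamma> n (\<epsilon> + 1 / n) S"
    if "S \<in> set_pmf (sample_dist p m n)" and "S \<notin> Bad" for S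
    unfolding uniform_margin_bound_def add.assoc[symmetric]
    using pop_error_le_on_good_sample[OF p n K G S1 grid few] sample_dist_support[OF that(1)]
      that(2) unfolding Bad_def by (auto simp: not_le)
  ultimately show ?thesis by (intro measure_pmf_prob_ge_outside) auto
qed

lemma one_le_ln_exp_1_add: "0 \<le> x \<Longrightarrow> 1 \<le> ln (exp 1 + (x::real))"
  using ln_le_cancel_iff[of "exp 1" "exp 1 + x"] by (simp add: add_pos_nonneg)

lemma ln_le_ln_exp_1_add: "0 < x \<Longrightarrow> ln x \<le> ln (exp 1 + (x::real))"
  by (subst ln_le_cancel_iff) (auto intro: add_pos_pos)

lemma ln_mult_le_ln_exp_1_add:
  fixes c x y :: real
  assumes "1 \<le> c" "1 \<le> x" "1 \<le> y"
  shows "ln (c * x * y) \<le> (ln c + 2) * ln (exp 1 + x) * ln (exp 1 + y)"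
proof -
  define a b where "a = ln (exp 1 + x)" and "b = ln (exp 1 + y)"
  have a: "1 \<le> a" and b: "1 \<le> b" unfolding a_def b_def using assms by (simp_all add: one_le_ln_exp_1_add)
  have "ln (c * x * y) = ln c + ln x + ln y" using assms by (simp add: ln_mult)
  also have "\<dots> \<le> ln c + a + b"
    unfolding a_def b_def using assms ln_le_ln_exp_1_add[of x] ln_le_ln_exp_1_add[of y] by simp
  also have "\<dots> \<le> ln c * (a * b) + 2 * (a * b)"
  proof -
    have ab: "1 * 1 \<le> a * b" using a b by (intro mult_mono) auto
    have "a * 1 \<le> a * b" "1 * b \<le> a * b" using a b by (intro mult_left_mono mult_right_mono; simp)+
    moreover have "ln c * 1 \<le> ln c * (a * b)" using assms(1) ab by (intro mult_left_mono) auto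
    ultimately show ?thesis by simp
  qed
  finally show ?thesis unfolding a_def b_def by (simp add: algebra_simps)
qed

lemma ln_numeral_bounds: "ln (195::real) \<le> 8" "ln (8::real) \<le> 3"
proof -
  have "ln (195::real) \<le> ln 256" by simp
  also have "ln (256::real) = 8 * ln 2" using ln_realpow[of 2 8] by simp
  finally show "ln (195::real) \<le> 8" using ln_2_less_1 by simp
  have "ln (8::real) = 3 * ln 2" using ln_realpow[of 2 3] by simp
  thus "ln (8::real) \<le> 3" using ln_2_less_1 by simp
qed

lemma grid_size:
  fixes \<rho> :: real and m :: nat
  assumes "m \<ge> 1" and "0 < \<rho>"
  defines "G \<equiv> nat \<lceil>16 * pi * m * \<rho>\<rceil>"
  shows "G > 0" and "2 * pi * m / G * \<rho> \<le> 1 / 8"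
proof -
  have ge: "16 * pi * m * \<rho> \<le> G" unfolding G_def by (rule real_nat_ceiling_ge)
  moreover have "0 < 16 * pi * m * \<rho>" using assms by simp
  ultimately show G: "G > 0" by linarith
  show "2 * pi * m / G * \<rho> \<le> 1 / 8" using ge G by (simp add: field_simps)
qed

lemma ln_grid_size_le:
  fixes \<rho> :: real and p m n :: nat
  assumes p: "p \<ge> 1" and m: "m \<ge> 1" and n: "n \<ge> 1" and \<rho>: "0 < \<rho>" "\<rho> < n"
  defines "G \<equiv> nat \<lceil>16 * pi * m * \<rho>\<rceil>"
  shows "ln 3 + p * ln G \<le> 10 * p * ln (exp 1 + m) * ln (exp 1 + n)"
proof -
  have G: "1 \<le> real G" using grid_size(1)[OF m \<rho>(1)] unfolding G_def by simp
  have "0 \<le> 16 * pi * m * \<rho>" using \<rho> by simp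
  hence "real G \<le> 16 * pi * m * \<rho> + 1"
    unfolding G_def using of_int_ceiling_le_add_one[of "16 * pi * m * \<rho>"] by simp
  also have "\<dots> \<le> 16 * 4 * real m * real n + 1"
    using \<rho> pi_less_4 by (intro add_right_mono mult_mono) auto
  also have "\<dots> \<le> 65 * real m * real n"
    using mult_mono[of 1 "real m" 1 "real n"] m n by simp
  finally have G_le: "real G \<le> 65 * real m * real n" .
  have "ln 3 + ln G = ln (3 * real G)" using G by (simp add: ln_mult)
  also have "\<dots> \<le> ln (195 * real m * real n)"
    using G G_le by (subst ln_le_cancel_iff) auto
  finally have ln_3G: "ln 3 + ln G \<le> ln (195 * real m * real n)" .
  have "ln 3 + p * ln G \<le> p * (ln 3 + ln G)"
    using p G by (simp add: distrib_left mult_le_cancel_right1)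
  also have "\<dots> \<le> p * ln (195 * real m * real n)"
    using ln_3G by (intro mult_left_mono) auto
  also have "\<dots> \<le> p * ((ln 195 + 2) * ln (exp 1 + m) * ln (exp 1 + n))"
    using m n by (intro mult_left_mono ln_mult_le_ln_exp_1_add) auto
  also have "\<dots> \<le> p * (10 * ln (exp 1 + m) * ln (exp 1 + n))"
    using ln_numeral_bounds(1) one_le_ln_exp_1_add[of m] one_le_ln_exp_1_add[of n]
    by (intro mult_left_mono mult_right_mono) auto
  finally show ?thesis by (simp add: mult.assoc)
qed

lemma sample_size:
  fixes \<rho> :: real and p n :: nat
  assumes p: "p \<ge> 1" and n: "n \<ge> 1" and \<rho>: "1 / 2 < \<rho>"
  defines "K \<equiv> nat \<lceil>128 * \<rho>\<^sup>2 * ln (8 * real p * real n)\<rceil>"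
  shows "K > 0" and "8 * real p * real n * exp (- real K / (128 * \<rho>\<^sup>2)) \<le> 1"
proof -
  have pn: "1 \<le> real p * real n" using mult_mono[of 1 "real p" 1 "real n"] p n by simp
  hence ln_pos: "0 < ln (8 * real p * real n)" by (simp add: mult.assoc)
  have ge: "128 * \<rho>\<^sup>2 * ln (8 * real p * real n) \<le> real K" unfolding K_def by (rule real_nat_ceiling_ge)
  moreover have "0 < 128 * \<rho>\<^sup>2 * ln (8 * real p * real n)" using \<rho> ln_pos by simp
  ultimately show "K > 0" by linarith
  have "ln (8 * real p * real n) \<le> real K / (128 * \<rho>\<^sup>2)" using ge \<rho> by (simp add: field_simps)
  hence "exp (- real K / (128 * \<rho>\<^sup>2)) \<le> exp (- ln (8 * real p * real n))" by simp
  also have "\<dots> = 1 / (8 * real p * real n)" using p n by (simp add: exp_minus inverse_eq_divide)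
  finally show "8 * real p * real n * exp (- real K / (128 * \<rho>\<^sup>2)) \<le> 1" using pn by (simp add: field_simps)
qed

lemma sample_size_le:
  fixes \<rho> :: real and p n :: nat
  assumes p: "p \<ge> 1" and n: "n \<ge> 1" and \<rho>: "1 / 2 < \<rho>"
  shows "nat \<lceil>128 * \<rho>\<^sup>2 * ln (8 * real p * real n)\<rceil> \<le> 644 * \<rho>\<^sup>2 * ln (exp 1 + p) * ln (exp 1 + n)"
proof -
  have "(1 / 2)\<^sup>2 \<le> \<rho>\<^sup>2" using \<rho> by (intro power_mono) auto
  hence \<rho>2: "1 \<le> 4 * \<rho>\<^sup>2" by (simp add: power2_eq_square)
  define lp lq where "lp = ln (exp 1 + p)" and "lq = ln (exp 1 + n)"
  have lpq: "1 \<le> lp * lq"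
    unfolding lp_def lq_def using one_le_ln_exp_1_add[of p] one_le_ln_exp_1_add[of n]
    using mult_mono[of 1 "ln (exp 1 + p)" 1 "ln (exp 1 + n)"] by simp
  have pn: "1 \<le> real p * real n" using mult_mono[of 1 "real p" 1 "real n"] p n by simp
  have "ln (8 * real p * real n) \<le> (ln 8 + 2) * lp * lq"
    unfolding lp_def lq_def using p n by (intro ln_mult_le_ln_exp_1_add) auto
  also have "\<dots> = (ln 8 + 2) * (lp * lq)" by (simp add: mult.assoc)
  also have "\<dots> \<le> 5 * (lp * lq)"
    using ln_numeral_bounds(2) lpq by (intro mult_right_mono) auto
  finally have ln8: "ln (8 * real p * real n) \<le> 5 * (lp * lq)" .
  have "0 < ln (8 * real p * real n)" using pn by (simp add: mult.assoc)
  hence "nat \<lceil>128 * \<rho>\<^sup>2 * ln (8 * real p * real n)\<rceil> \<le> 128 * \<rho>\<^sup>2 * ln (8 * real p * real n) + 1"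
    using of_int_ceiling_le_add_one[of "128 * \<rho>\<^sup>2 * ln (8 * real p * real n)"] by simp
  also have "\<dots> \<le> 128 * \<rho>\<^sup>2 * (5 * (lp * lq)) + 4 * \<rho>\<^sup>2 * (lp * lq)"
  proof (rule add_mono)
    show "128 * \<rho>\<^sup>2 * ln (8 * real p * real n) \<le> 128 * \<rho>\<^sup>2 * (5 * (lp * lq))"
      using ln8 by (intro mult_left_mono) auto
    have "4 * \<rho>\<^sup>2 * 1 \<le> 4 * \<rho>\<^sup>2 * (lp * lq)" using lpq by (intro mult_left_mono) auto
    thus "1 \<le> 4 * \<rho>\<^sup>2 * (lp * lq)" using \<rho>2 by linarith
  qed
  finally show ?thesis unfolding lp_def lq_def by (simp add: algebra_simps)
qed

lemma logfac_ge:
  assumes "0 \<le> S1" and "0 < \<delta>"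
  shows "ln (exp 1 + p) * ln (exp 1 + m) * ln (exp 1 + n) \<le> logfac n m p S1 \<delta>"
    and "ln (exp 1 + n) \<le> logfac n m p S1 \<delta>"
    and "ln (exp 1 + 1 / \<delta>) \<le> logfac n m p S1 \<delta>"
    and "1 \<le> logfac n m p S1 \<delta>"
proof -
  let ?a = "ln (exp 1 + real n)" and ?b = "ln (exp 1 + real m)" and ?c = "ln (exp 1 + real p)"
    and ?e = "ln (exp 1 + S1)" and ?f = "ln (exp 1 + 1 / \<delta>)"
  have ge1: "1 \<le> ?a" "1 \<le> ?b" "1 \<le> ?c" "1 \<le> ?e" "1 \<le> ?f"
    using assms by (simp_all add: one_le_ln_exp_1_add)
  have le_mult: "x \<le> x * y" if "0 \<le> x" "1 \<le> y" for x y :: real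
    using mult_left_mono[OF that(2,1)] by simp
  have a_abc: "?a \<le> ?a * ?b * ?c"
    using le_mult[of ?a ?b] le_mult[of "?a * ?b" ?c] ge1 by linarith
  have ef: "1 \<le> ?e * ?f" using le_mult[of ?e ?f] ge1 by linarith
  have L: "logfac n m p S1 \<delta> = (?a * ?b * ?c) * (?e * ?f)"
    unfolding logfac_def by (simp add: mult_ac)
  have abc_L: "?a * ?b * ?c \<le> logfac n m p S1 \<delta>"
    unfolding L using le_mult[of "?a * ?b * ?c" "?e * ?f"] ef a_abc ge1 by linarith
  thus "?c * ?b * ?a \<le> logfac n m p S1 \<delta>" by (simp add: mult_ac)
  show "?a \<le> logfac n m p S1 \<delta>" using a_abc abc_L by linarith
  thus "1 \<le> logfac n m p S1 \<delta>" using ge1 by linarith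
  have "1 \<le> ?a * ?b * ?c * ?e" using le_mult[of "?a * ?b * ?c" ?e] a_abc ge1 by linarith
  moreover have "logfac n m p S1 \<delta> = ?f * (?a * ?b * ?c * ?e)"
    unfolding logfac_def by (simp add: mult_ac)
  ultimately show "?f \<le> logfac n m p S1 \<delta>" using le_mult[of ?f] ge1 by simp
qed

lemma sqrt_le_self: "1 \<le> x \<Longrightarrow> sqrt x \<le> (x::real)"
  using real_sqrt_le_mono[of x "x\<^sup>2"] by (simp add: power2_eq_square)

lemma sqrt_deviation_le:
  fixes A B L \<rho> :: real and p n :: nat
  assumes A: "0 \<le> A" "A \<le> (81 * \<rho> * p * L)\<^sup>2" and B: "0 \<le> B" "B \<le> L\<^sup>2"
    and L: "1 \<le> L" and n: "1 \<le> n" and \<rho>: "0 \<le> \<rho>"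
  shows "sqrt ((A + B) / (2 * n)) + 1 / n \<le> 100 * \<rho> * (p / sqrt n) * L + 100 * (1 / sqrt n) * L"
proof -
  have sn: "1 \<le> sqrt n" "sqrt n \<le> n" using n sqrt_le_self[of n] by simp_all
  have "sqrt ((A + B) / (2 * n)) \<le> sqrt ((A + B) / n)"
    using A B n by (intro real_sqrt_le_mono divide_left_mono) auto
  also have "\<dots> = sqrt (A + B) / sqrt n" by (simp add: real_sqrt_divide)
  also have "sqrt (A + B) \<le> sqrt A + sqrt B" by (rule sqrt_add_le_add_sqrt[OF A(1) B(1)])
  also have "sqrt A \<le> 81 * \<rho> * p * L"
    using real_sqrt_le_mono[OF A(2)] \<rho> L by simp
  also have "sqrt B \<le> L" using real_sqrt_le_mono[OF B(2)] L by simp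
  finally have dev: "sqrt ((A + B) / (2 * n)) \<le> (81 * \<rho> * p * L + L) / sqrt n"
    using sn by (simp add: divide_right_mono)
  have "1 / n \<le> 1 / sqrt n" using sn by (intro divide_left_mono) auto
  also have "\<dots> \<le> L / sqrt n" using sn L by (intro divide_right_mono) auto
  finally have "sqrt ((A + B) / (2 * n)) + 1 / n \<le> (81 * \<rho> * p * L + 2 * L) / sqrt n"
    using dev by (simp add: add_divide_distrib)
  also have "\<dots> \<le> (100 * \<rho> * p * L + 100 * L) / sqrt n"
    using sn \<rho> L by (intro divide_right_mono add_mono mult_right_mono) auto
  finally show ?thesis by (simp add: add_divide_distrib)
qed

lemma ln_card_cover_params_le:
  fixes \<rho> \<delta> S1 :: real and p m n :: nat
  assumes p: "p \<ge> 1" and m: "m \<ge> 1" and n: "n \<ge> 1" and S1: "S1 \<ge> 0" and \<delta>: "0 < \<delta>"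
    and \<rho>: "1 / 2 < \<rho>" "\<rho> < n"
  defines "K \<equiv> nat \<lceil>128 * \<rho>\<^sup>2 * ln (8 * real p * real n)\<rceil>" and "G \<equiv> nat \<lceil>16 * pi * m * \<rho>\<rceil>"
    and "L \<equiv> logfac n m p S1 \<delta>"
  shows "ln (card (cover_params p K G)) \<le> (81 * \<rho> * p * L)\<^sup>2"
proof -
  let ?lp = "ln (exp 1 + real p)" and ?lm = "ln (exp 1 + real m)" and ?ln = "ln (exp 1 + real n)"
  have G: "G > 0" unfolding G_def using \<rho>(1) by (intro grid_size(1)[OF m]) simp
  have logs: "0 \<le> ?lp" "0 \<le> ?lm" "0 \<le> ?ln"
    using one_le_ln_exp_1_add[of p] one_le_ln_exp_1_add[of m] one_le_ln_exp_1_add[of n] by auto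
  have L: "?lp * ?lm * ?ln \<le> L" "?ln \<le> L"
    unfolding L_def using logfac_ge[OF S1 \<delta>] by simp_all
  have "real p * real K \<le> real p * (644 * \<rho>\<^sup>2 * ?lp * ?ln)"
    unfolding K_def using sample_size_le[OF p n \<rho>(1)] by (intro mult_left_mono) auto
  moreover have "ln 3 + p * ln G \<le> 10 * p * ?lm * ?ln"
    unfolding G_def using ln_grid_size_le[OF p m n _ \<rho>(2)] \<rho>(1) by simp
  ultimately have "real p * real K * (ln 3 + p * ln G)
      \<le> real p * (644 * \<rho>\<^sup>2 * ?lp * ?ln) * (10 * p * ?lm * ?ln)"
    by (rule mult_mono) (use G logs in auto)
  also have "\<dots> = 6440 * (\<rho> * p)\<^sup>2 * ((?lp * ?lm * ?ln) * ?ln)"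
    by (simp add: power2_eq_square algebra_simps)
  also have "\<dots> \<le> 6440 * (\<rho> * p)\<^sup>2 * (L * L)"
    using L logs by (intro mult_left_mono mult_mono) auto
  also have "\<dots> \<le> 6561 * (\<rho> * p)\<^sup>2 * (L * L)" by (intro mult_right_mono) auto
  also have "\<dots> = (81 * \<rho> * p * L)\<^sup>2" by (simp add: power2_eq_square algebra_simps)
  also have "real p * real K * (ln 3 + p * ln G) = ln (card (cover_params p K G))"
    using G by (simp add: card_cover_params ln_realpow ln_mult distrib_left)
  finally show ?thesis .
qed

lemma cover_deviation_le:
  fixes \<rho> \<delta> S1 :: real and p m n :: nat
  assumes p: "p \<ge> 1" and m: "m \<ge> 1" and n: "n \<ge> 1" and S1: "S1 \<ge> 0" and \<delta>: "0 < \<delta>" "\<delta> < 1"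
    and \<rho>: "1 / 2 < \<rho>" "\<rho> * p < sqrt n"
  defines "K \<equiv> nat \<lceil>128 * \<rho>\<^sup>2 * ln (8 * real p * real n)\<rceil>" and "G \<equiv> nat \<lceil>16 * pi * m * \<rho>\<rceil>"
    and "L \<equiv> logfac n m p S1 \<delta>"
  shows "sqrt (ln (card (cover_params p K G) / \<delta>) / (2 * real n)) + 1 / n
           \<le> 100 * \<rho> * (p / sqrt n) * L + 100 * (1 / sqrt n) * L"
proof -
  have "\<rho> \<le> \<rho> * p" using p \<rho>(1) by simp
  also have "\<dots> < sqrt n" by (rule \<rho>(2))
  also have "sqrt n \<le> n" using n sqrt_le_self[of n] by simp
  finally have "\<rho> < n" .
  have G: "G > 0" unfolding G_def using \<rho>(1) by (intro grid_size(1)[OF m]) simp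
  have L: "ln (exp 1 + 1 / \<delta>) \<le> L" "1 \<le> L"
    unfolding L_def using logfac_ge[OF S1 \<delta>(1)] by simp_all
  have "1 \<le> card (cover_params p K G)"
    using G by (simp add: card_cover_params Suc_leI one_le_power)
  hence "ln (card (cover_params p K G) / \<delta>) = ln (card (cover_params p K G)) + ln (1 / \<delta>)"
    using \<delta> by (simp add: ln_div)
  moreover have "ln (1 / \<delta>) \<le> L\<^sup>2"
  proof -
    have "ln (1 / \<delta>) \<le> ln (exp 1 + 1 / \<delta>)" using \<delta> ln_le_ln_exp_1_add[of "1 / \<delta>"] by simp
    also have "\<dots> \<le> L * 1" using L by simp
    also have "\<dots> \<le> L\<^sup>2" using L by (simp add: power2_eq_square)
    finally show ?thesis .
  qed
  moreover have "0 \<le> ln (card (cover_params p K G))" "0 \<le> ln (1 / \<delta>)"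
    using \<open>1 \<le> card (cover_params p K G)\<close> \<delta> by simp_all
  ultimately show ?thesis
    using sqrt_deviation_le[of "ln (card (cover_params p K G))" \<rho> p L "ln (1 / \<delta>)" n] n L \<rho>(1)
      ln_card_cover_params_le[OF p m n S1 \<delta>(1) \<rho>(1) \<open>\<rho> < n\<close>]
    unfolding K_def G_def L_def by simp
qed

lemma uniform_margin_bound_mono:
  "uniform_margin_bound p m d S1 \<gamma> n \<epsilon> S \<Longrightarrow> \<epsilon> \<le> \<epsilon>' \<Longrightarrow> uniform_margin_bound p m d S1 \<gamma> n \<epsilon>' S"
  unfolding uniform_margin_bound_def by (meson add_left_mono order_trans)

lemma prob_uniform_margin_bound_nontrivial:
  fixes p m d n :: nat and S1 \<gamma> \<delta> :: real
  assumes p: "p \<ge> 2" and m: "m \<ge> 1" and n: "n \<ge> 1" and S1: "S1 > 0" and \<gamma>: "\<gamma> > 0"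
    and \<delta>: "0 < \<delta>" "\<delta> < 1" and narrow: "\<gamma> < 2 * S1"
    and small: "100 * (S1 / \<gamma>) * (p / sqrt n) * logfac n m p S1 \<delta> < 1"
  defines "\<epsilon> \<equiv> 100 * (S1 / \<gamma>) * (p / sqrt n) * logfac n m p S1 \<delta>
                + 100 * (1 / sqrt n) * logfac n m p S1 \<delta>"
  shows "1 - \<delta> \<le> measure_pmf.prob (sample_dist p m n) {S. uniform_margin_bound p m d S1 \<gamma> n \<epsilon> S}"
proof -
  define \<rho> where "\<rho> = S1 / \<gamma>"
  define K where "K = nat \<lceil>128 * \<rho>\<^sup>2 * ln (8 * real p * real n)\<rceil>"
  define G where "G = nat \<lceil>16 * pi * m * \<rho>\<rceil>"
  have p1: "p \<ge> 1" using p by simp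
  have \<rho>: "1 / 2 < \<rho>" unfolding \<rho>_def using narrow \<gamma> by (simp add: field_simps)
  have "\<rho> * (p / sqrt n) * 1 \<le> 100 * \<rho> * (p / sqrt n) * logfac n m p S1 \<delta>"
    using logfac_ge(4)[of S1 \<delta>] S1 \<delta> \<rho> by (intro mult_mono) auto
  hence "\<rho> * (p / sqrt n) < 1" using small unfolding \<rho>_def by linarith
  hence "\<rho> * p < sqrt n" using n by (simp add: field_simps)
  have K: "K > 0" "8 * real p * real n * exp (- real K / (128 * \<rho>\<^sup>2)) \<le> 1"
    unfolding K_def using sample_size[OF p1 n \<rho>] by simp_all
  have G: "G > 0" "2 * pi * m / G * \<rho> \<le> 1 / 8"
    unfolding G_def using grid_size[OF m, of \<rho>] \<rho> by simp_all
  have grid: "2 * pi * m / G * S1 \<le> \<gamma> / 8"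
    using mult_right_mono[OF G(2), of \<gamma>] \<gamma> unfolding \<rho>_def by simp
  have "- real K * (\<gamma> / 8)\<^sup>2 / (2 * S1\<^sup>2) = - real K / (128 * \<rho>\<^sup>2)"
    unfolding \<rho>_def using S1 \<gamma> by (simp add: field_simps power2_eq_square)
  hence few: "8 * real p * real n * exp (- real K * (\<gamma> / 8)\<^sup>2 / (2 * S1\<^sup>2)) \<le> 1"
    using K(2) by simp
  have "1 - \<delta> \<le> measure_pmf.prob (sample_dist p m n)
      {S. uniform_margin_bound p m d S1 \<gamma> n (sqrt (ln (card (cover_params p K G) / \<delta>) / (2 * real n)) + 1 / n) S}"
    using p n by (intro prob_uniform_margin_bound_cover[OF _ _ K(1) G(1) S1 grid few \<delta>(1)]) (use \<delta> in auto)
  also have "\<dots> \<le> measure_pmf.prob (sample_dist p m n) {S. uniform_margin_bound p m d S1 \<gamma> n \<epsilon> S}"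
    using cover_deviation_le[OF p1 m n _ \<delta> \<rho> \<open>\<rho> * p < sqrt n\<close>] S1
    unfolding \<epsilon>_def \<rho>_def K_def G_def
    by (intro measure_pmf.finite_measure_mono) (auto elim: uniform_margin_bound_mono)
  finally show ?thesis .
qed

lemma margin_error_wide_margin:
  assumes p: "p \<ge> 2" and n: "n > 0" and S: "S \<in> set_pmf (sample_dist p m n)"
    and V: "mat_inf_norm p d V \<le> S1" and wide: "2 * S1 \<le> \<gamma>"
  shows "margin_error p d W V \<gamma> n S = 1"
proof -
  let ?s = "sine_net p d W V"
  have bound: "\<bar>?s x k\<bar> \<le> S1" if "k < p" for x k
    using abs_sine_net_le[of p d W V x k] row_norm_le_mat_inf_norm[OF that, where d = d and V = V] V by linarith
  have "?s (fst (S i)) (snd (S i)) \<le> \<gamma> + Max (?s (fst (S i)) ` ({..<p} - {snd (S i)}))" if i: "i < n" for i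
  proof -
    obtain x y where xy: "S i = (x, y)" by fastforce
    have y: "y < p"
      using data_dist_support(1)[of p x y m] sample_dist_support[OF S i] xy p by simp
    define k where "k = (if y = 0 then 1 else 0 :: nat)"
    have k: "k < p" "k \<noteq> y" unfolding k_def using p by auto
    have "?s x k \<le> Max (?s x ` ({..<p} - {y}))" using k by (intro Max_ge) auto
    thus ?thesis using bound[OF y, of x] bound[OF k(1), of x] wide xy by simp
  qed
  hence "{i \<in> {..<n}. ?s (fst (S i)) (snd (S i)) \<le> \<gamma> + Max (?s (fst (S i)) ` ({..<p} - {snd (S i)}))}
         = {..<n}" by auto
  thus ?thesis unfolding margin_error_def using n by simp
qed

lemma uniform_margin_bound_trivial:
  assumes "p \<ge> 2" and "n > 0" and "S \<in> set_pmf (sample_dist p m n)" and "0 \<le> \<epsilon>"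
    and "2 * S1 \<le> \<gamma> \<or> 1 \<le> \<epsilon>"
  shows "uniform_margin_bound p m d S1 \<gamma> n \<epsilon> S"
  unfolding uniform_margin_bound_def
proof (intro allI impI)
  fix W V assume V: "mat_inf_norm p d V \<le> S1"
  have "pop_error p m d W V \<le> 1" unfolding pop_error_def by simp
  moreover have "0 \<le> margin_error p d W V \<gamma> n S" unfolding margin_error_def by simp
  ultimately show "pop_error p m d W V \<le> margin_error p d W V \<gamma> n S + \<epsilon>"
    using assms margin_error_wide_margin[OF assms(1-3) V] by fastforce
qed

lemma prob_uniform_margin_bound:
  fixes p m d n :: nat and S1 \<gamma> \<delta> :: real
  assumes p: "p \<ge> 2" and m: "m \<ge> 1" and S1: "S1 > 0" and \<gamma>: "\<gamma> > 0"
    and \<delta>: "0 < \<delta>" "\<delta> < 1" and n: "n \<ge> 1"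
  defines "L \<equiv> logfac n m p S1 \<delta>"
  shows "1 - \<delta> \<le> measure_pmf.prob (sample_dist p m n)
           {S. uniform_margin_bound p m d S1 \<gamma> n (100 * (S1 / \<gamma>) * (p / sqrt n) * L + 100 * (1 / sqrt n) * L) S}"
proof (cases "\<gamma> < 2 * S1 \<and> 100 * (S1 / \<gamma>) * (p / sqrt n) * L < 1")
  case True
  thus ?thesis unfolding L_def using prob_uniform_margin_bound_nontrivial[OF p m n S1 \<gamma> \<delta>] by blast
next
  case False
  have "1 \<le> L" unfolding L_def using S1 \<delta> by (intro logfac_ge(4)) auto
  hence "0 \<le> 100 * (S1 / \<gamma>) * (p / sqrt n) * L" "0 \<le> 100 * (1 / sqrt n) * L"
    using S1 \<gamma> by simp_all
  with False show ?thesis using p n \<delta>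
    by (intro measure_pmf_prob_ge_outside[where B = "{}"]) (auto intro!: uniform_margin_bound_trivial)
qed

theorem mainTheorem9:
  "\<exists>(C::real) (k::nat). C \<ge> 0 \<and>
     (\<forall>(p::nat) (m::nat) (d::nat) (S1::real) (\<gamma>::real) (\<delta>::real) (n::nat).
        p \<ge> 2 \<longrightarrow> m \<ge> 1 \<longrightarrow> d \<ge> 1 \<longrightarrow> S1 > 0 \<longrightarrow> \<gamma> > 0 \<longrightarrow>
        0 < \<delta> \<longrightarrow> \<delta> < 1 \<longrightarrow> n \<ge> 1 \<longrightarrow>
        measure_pmf.prob (sample_dist p m n)
          {S. \<forall>W V. mat_inf_norm p d V \<le> S1 \<longrightarrow>
                pop_error p m d W V
                  \<le> margin_error p d W V \<gamma> n S
                    + C * (S1 / \<gamma>) * (real p / sqrt (real n)) * logfac n m p S1 \<delta> ^ k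
                    + C * (1 / sqrt (real n)) * logfac n m p S1 \<delta> ^ k}
          \<ge> 1 - \<delta>)"
  using prob_uniform_margin_bound unfolding uniform_margin_bound_def
  by (intro exI[of _ "100::real"] exI[of _ "1::nat"]) (simp add: add.assoc)

end
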